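(* Let $\Delta$ be a $(d-1)$-dimensional simplicial complex, $k$ a field and $s$ an integer. If $\Delta$ is $s$-Lefschetz over $k$, then the cone $\mathrm{cone}(\Delta)$ is also $s$-Lefschetz over $k$.
   Context: $\mathrm{cone}(\Delta)=\{F:F\in\Delta\}\cup\{F\cup\{v\}:F\in\Delta\}$ for a new vertex $v$. For a simplicial complex $\Gamma$ on vertex set $[n]$, $k[\Gamma]=k[x_1,\dots,x_n]/I_\Gamma$ is its Stanley–Reisner ring. A degree-one element $\omega$ is an $s$-Lefschetz element for $k[\Gamma]/\Theta$ ($\Theta$ a maximal linear system of parameters of $k[\Gamma]$) if $\omega^{s-2i}:(k[\Gamma]/\Theta)_i\to(k[\Gamma]/\Theta)_{s-i}$ is injective for all $0\le i\le\lfloor(s-1)/2\rfloor$; $\Gamma$ is $s$-Lefschetz over $k$ if such a pair $(\Theta,\omega)$ exists. *)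

theory Defs
  imports Main "HOL-Library.Poly_Mapping"
begin

text \<open>Polynomials in variables indexed by nat over a field: monomials are
finitely supported exponent vectors, polynomials finitely supported coefficient maps.\<close>

type_synonym 'k mpoly = "(nat \<Rightarrow>\<^sub>0 nat) \<Rightarrow>\<^sub>0 'k"

definition mdeg :: "(nat \<Rightarrow>\<^sub>0 nat) \<Rightarrow> nat" where
  "mdeg m = (\<Sum>j\<in>Poly_Mapping.keys m. Poly_Mapping.lookup m j)"

definition polyring :: "'k itself \<Rightarrow> nat set \<Rightarrow> ('k::field) mpoly set" where
  "polyring _ V = {f. \<forall>m\<in>Poly_Mapping.keys f. Poly_Mapping.keys m \<subseteq> V}"

definition homog :: "nat \<Rightarrow> ('k::field) mpoly \<Rightarrow> bool" where
  "homog i f \<longleftrightarrow> (\<forall>m\<in>Poly_Mapping.keys f. mdeg m = i)"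

definition var :: "nat \<Rightarrow> ('k::field) mpoly" where
  "var j = Poly_Mapping.single (Poly_Mapping.single j 1) 1"

definition monom :: "(nat \<Rightarrow>\<^sub>0 nat) \<Rightarrow> ('k::field) mpoly" where
  "monom m = Poly_Mapping.single m 1"

definition ideal_in :: "nat set \<Rightarrow> ('k::field) mpoly set \<Rightarrow> 'k mpoly set" where
  "ideal_in V G = {f. \<exists>S c. finite S \<and> S \<subseteq> G \<and> (\<forall>g\<in>S. c g \<in> polyring TYPE('k) V)
                       \<and> f = (\<Sum>g\<in>S. c g * g)}"

definition simplicial_complex :: "nat set \<Rightarrow> nat set set \<Rightarrow> bool" where
  "simplicial_complex V \<Delta> \<longleftrightarrow> finite V \<and> {} \<in> \<Delta> \<and> (\<forall>F\<in>\<Delta>. F \<subseteq> V)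
      \<and> (\<forall>F\<in>\<Delta>. \<forall>G. G \<subseteq> F \<longrightarrow> G \<in> \<Delta>)"

text \<open>dimension + 1 (= Krull dimension of the Stanley--Reisner ring)\<close>
definition dimp1 :: "nat set set \<Rightarrow> nat" where
  "dimp1 \<Delta> = Max (card ` \<Delta>)"

definition cone :: "nat \<Rightarrow> nat set set \<Rightarrow> nat set set" where
  "cone v \<Delta> = \<Delta> \<union> {insert v F | F. F \<in> \<Delta>}"

definition SR_gens :: "nat set \<Rightarrow> nat set set \<Rightarrow> ('k::field) mpoly set" where
  "SR_gens V \<Delta> = {(\<Prod>j\<in>F. var j) | F. F \<subseteq> V \<and> F \<notin> \<Delta>}"

definition linear_form :: "nat set \<Rightarrow> ('k::field) mpoly \<Rightarrow> bool" where
  "linear_form V f \<longleftrightarrow> f \<in> polyring TYPE('k) V \<and> homog 1 f"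

text \<open>The ideal I_Delta + (Theta); k[Delta]/Theta is the quotient by it.\<close>
definition SR_Theta :: "nat set \<Rightarrow> nat set set \<Rightarrow> ('k::field) mpoly list \<Rightarrow> 'k mpoly set" where
  "SR_Theta V \<Delta> \<Theta> = ideal_in V (SR_gens V \<Delta> \<union> set \<Theta>)"

text \<open>Maximal linear system of parameters: dim+1 linear forms such that
k[Delta]/Theta is finite dimensional (all monomials of large degree vanish).\<close>
definition lsop :: "nat set \<Rightarrow> nat set set \<Rightarrow> ('k::field) mpoly list \<Rightarrow> bool" where
  "lsop V \<Delta> \<Theta> \<longleftrightarrow> length \<Theta> = dimp1 \<Delta> \<and> (\<forall>\<theta>\<in>set \<Theta>. linear_form V \<theta>)
     \<and> (\<exists>N. \<forall>m. Poly_Mapping.keys m \<subseteq> V \<and> mdeg m \<ge> N \<longrightarrow> monom m \<in> SR_Theta V \<Delta> \<Theta>)"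

text \<open>omega^(s-2i) : (k[Delta]/Theta)_i \<rightarrow> (k[Delta]/Theta)_(s-i) injective for
0 \<le> i \<le> floor((s-1)/2); injectivity on the quotient unfolded.\<close>
definition lefschetz_element :: "nat set \<Rightarrow> nat set set \<Rightarrow> int \<Rightarrow> ('k::field) mpoly list \<Rightarrow> 'k mpoly \<Rightarrow> bool" where
  "lefschetz_element V \<Delta> s \<Theta> \<omega> \<longleftrightarrow> linear_form V \<omega> \<and>
     (\<forall>i::nat. int i \<le> (s - 1) div 2 \<longrightarrow>
        (\<forall>f\<in>polyring TYPE('k) V. homog i f \<longrightarrow>
            \<omega> ^ nat (s - 2 * int i) * f \<in> SR_Theta V \<Delta> \<Theta> \<longrightarrow> f \<in> SR_Theta V \<Delta> \<Theta>))"

definition s_lefschetz :: "'k::field itself \<Rightarrow> nat set \<Rightarrow> nat set set \<Rightarrow> int \<Rightarrow> bool" where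
  "s_lefschetz _ V \<Delta> s \<longleftrightarrow>
     (\<exists>(\<Theta>::'k mpoly list) \<omega>. lsop V \<Delta> \<Theta> \<and> lefschetz_element V \<Delta> s \<Theta> \<omega>)"

end

theory Submission
  imports Defs
begin

text \<open>
  Let \<Theta> be a linear system of
  parameters for k[\<Delta>] with Lefschetz element \<omega>.  For the cone over \<Delta> with
  apex v we take the system \<Theta>' = \<Theta> @ [x_v] and the same element \<omega>.

  The tool is the substitution x_v := 0, a ring homomorphism that fixes
  k[x_V] and splits every polynomial as f = f|_(x_v=0) + x_v * (f div x_v).
  It maps every generator of I_cone + (\<Theta>') either to 0 or to a generator of
  I_\<Delta> + (\<Theta>), while I_\<Delta> + (\<Theta>) is contained in I_cone + (\<Theta>').  Hence a
  polynomial f in k[x_V, x_v] lies in I_cone + (\<Theta>') iff f|_(x_v=0) lies in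
  I_\<Delta> + (\<Theta>); this is the isomorphism k[cone \<Delta>]/\<Theta>' = k[\<Delta>]/\<Theta>.  Together
  with dim(cone \<Delta>) = dim \<Delta> + 1 this transfers the system of parameters and
  the Lefschetz injectivity from \<Delta> to its cone.
\<close>


section \<open>Polynomial rings and ideals\<close>

lemma polyring_UNIV: "f \<in> polyring T UNIV"
  by (simp add: polyring_def)

lemma polyring_zero: "0 \<in> polyring T V"
  by (simp add: polyring_def)

lemma polyring_one: "1 \<in> polyring T V"
  by (simp add: polyring_def)

lemma polyring_mono: "V \<subseteq> W \<Longrightarrow> polyring T V \<subseteq> polyring T W"
  by (auto simp: polyring_def)

lemma polyring_add: "f \<in> polyring T V \<Longrightarrow> g \<in> polyring T V \<Longrightarrow> f + g \<in> polyring T V"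
  using keys_add[of f g] by (auto simp: polyring_def)

text \<open>Exponent vectors have no cancellation, so their supports add up exactly.\<close>
lemma keys_add_exponents:
  "Poly_Mapping.keys ((a::nat \<Rightarrow>\<^sub>0 nat) + b) = Poly_Mapping.keys a \<union> Poly_Mapping.keys b"
  by (auto simp: in_keys_iff lookup_add)

lemma polyring_mult: "f \<in> polyring T V \<Longrightarrow> g \<in> polyring T V \<Longrightarrow> f * g \<in> polyring T V"
  unfolding polyring_def using keys_mult[of f g] by (fastforce simp: keys_add_exponents)

lemma var_polyring: "j \<in> V \<Longrightarrow> (var j :: 'k::field mpoly) \<in> polyring TYPE('k) V"
  by (simp add: polyring_def var_def)

lemma monom_polyring:
  "Poly_Mapping.keys m \<subseteq> V \<Longrightarrow> (monom m :: 'k::field mpoly) \<in> polyring TYPE('k) V"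
  by (simp add: polyring_def monom_def)

lemma linear_form_mono: "V \<subseteq> W \<Longrightarrow> linear_form V f \<Longrightarrow> linear_form W f"
  unfolding linear_form_def using polyring_mono by blast

lemma linear_form_var: "j \<in> V \<Longrightarrow> linear_form V (var j :: 'k::field mpoly)"
  using var_polyring[of j V] unfolding linear_form_def homog_def mdeg_def by (simp add: var_def)

lemma sum_extend_zero:
  assumes "finite T" and "S \<subseteq> T"
  shows "(\<Sum>x\<in>T. (if x \<in> S then c x else 0) * x) = (\<Sum>x\<in>S. c x * (x::'a::comm_ring_1))"
proof -
  have "(\<Sum>x\<in>T. (if x \<in> S then c x else 0) * x) = (\<Sum>x\<in>T. if x \<in> S then c x * x else 0)"
    by (rule sum.cong) auto
  also have "\<dots> = (\<Sum>x\<in>S. c x * x)"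
    using assms by (simp add: sum.inter_restrict[symmetric] Int_absorb1)
  finally show ?thesis .
qed

lemma ideal_in_zero: "0 \<in> ideal_in V G"
  unfolding ideal_in_def by (intro CollectI exI[of _ "{}"]) auto

lemma ideal_in_gen:
  "p \<in> polyring TYPE('k) V \<Longrightarrow> g \<in> G \<Longrightarrow> p * g \<in> ideal_in V (G :: 'k::field mpoly set)"
  unfolding ideal_in_def by (intro CollectI exI[of _ "{g}"] exI[of _ "\<lambda>_. p"]) auto

text \<open>Sums of ideal elements: merge the two representations over the union of supports.\<close>
lemma ideal_in_add:
  assumes "f \<in> ideal_in V G" "g \<in> ideal_in V (G :: 'k::field mpoly set)"
  shows "f + g \<in> ideal_in V G"
proof -
  obtain S1 c1 where S1: "finite S1" "S1 \<subseteq> G" "\<forall>x\<in>S1. c1 x \<in> polyring TYPE('k) V"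
    and f: "f = (\<Sum>x\<in>S1. c1 x * x)"
    using assms(1) unfolding ideal_in_def by blast
  obtain S2 c2 where S2: "finite S2" "S2 \<subseteq> G" "\<forall>x\<in>S2. c2 x \<in> polyring TYPE('k) V"
    and g: "g = (\<Sum>x\<in>S2. c2 x * x)"
    using assms(2) unfolding ideal_in_def by blast
  define c where "c x = (if x \<in> S1 then c1 x else 0) + (if x \<in> S2 then c2 x else 0)" for x
  have "f = (\<Sum>x\<in>S1 \<union> S2. (if x \<in> S1 then c1 x else 0) * x)"
    unfolding f using S1(1) S2(1) by (intro sum_extend_zero[symmetric]) auto
  moreover have "g = (\<Sum>x\<in>S1 \<union> S2. (if x \<in> S2 then c2 x else 0) * x)"
    unfolding g using S1(1) S2(1) by (intro sum_extend_zero[symmetric]) auto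
  ultimately have "f + g = (\<Sum>x\<in>S1 \<union> S2. (if x \<in> S1 then c1 x else 0) * x)
              + (\<Sum>x\<in>S1 \<union> S2. (if x \<in> S2 then c2 x else 0) * x)"
    by simp
  also have "\<dots> = (\<Sum>x\<in>S1 \<union> S2. c x * x)"
    unfolding c_def distrib_right by (rule sum.distrib[symmetric])
  finally have "f + g = (\<Sum>x\<in>S1 \<union> S2. c x * x)" .
  moreover have "c x \<in> polyring TYPE('k) V" for x
    unfolding c_def using S1(3) S2(3) by (intro polyring_add) (simp_all add: polyring_zero)
  ultimately show ?thesis
    unfolding ideal_in_def using S1(1,2) S2(1,2)
    by (intro CollectI exI[of _ "S1 \<union> S2"] exI[of _ c]) auto
qed

lemma ideal_in_sum: "(\<And>x. x \<in> S \<Longrightarrow> h x \<in> ideal_in V G) \<Longrightarrow> sum h S \<in> ideal_in V G"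
  by (induction S rule: infinite_finite_induct) (auto simp: ideal_in_zero ideal_in_add)

lemma ideal_in_mono:
  assumes "V \<subseteq> W" and "G \<subseteq> H"
  shows "ideal_in V G \<subseteq> ideal_in W (H :: 'k::field mpoly set)"
proof
  fix f
  assume "f \<in> ideal_in V G"
  then obtain S c where S: "finite S" "S \<subseteq> G" "\<forall>x\<in>S. c x \<in> polyring TYPE('k) V"
    and "f = (\<Sum>x\<in>S. c x * x)"
    unfolding ideal_in_def by blast
  moreover have "\<forall>x\<in>S. c x \<in> polyring TYPE('k) W"
    using S(3) polyring_mono[OF assms(1)] by blast
  ultimately show "f \<in> ideal_in W H"
    unfolding ideal_in_def using assms(2)
    by (intro CollectI exI[of _ S] exI[of _ c]) auto
qed


section \<open>The substitution x_v := 0 and division by x_v\<close>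

text \<open>Setting x_v := 0 keeps exactly the terms whose monomial does not involve v.\<close>
definition kill_var :: "nat \<Rightarrow> ('k::field) mpoly \<Rightarrow> 'k mpoly" where
  "kill_var v f = Poly_Mapping.mapp (\<lambda>m c. c when Poly_Mapping.lookup m v = 0) f"

text \<open>The quotient of f by x_v, discarding the terms not divisible by x_v.\<close>
definition div_var :: "nat \<Rightarrow> ('k::field) mpoly \<Rightarrow> 'k mpoly" where
  "div_var v f = Abs_poly_mapping (\<lambda>m. Poly_Mapping.lookup f (m + Poly_Mapping.single v 1))"

lemma lookup_kill_var:
  "Poly_Mapping.lookup (kill_var v f) m = (Poly_Mapping.lookup f m when Poly_Mapping.lookup m v = 0)"
  by (auto simp: kill_var_def lookup_mapp when_def in_keys_iff)

text \<open>The coefficient map of div_var is finitely supported, since m \<mapsto> m + e_v is injective.\<close>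
lemma lookup_div_var:
  "Poly_Mapping.lookup (div_var v f) m = Poly_Mapping.lookup f (m + Poly_Mapping.single v 1)"
proof -
  have "finite ((\<lambda>m. m + Poly_Mapping.single v 1) -` {m. Poly_Mapping.lookup f m \<noteq> 0})"
    by (rule finite_vimageI) (auto simp: inj_on_def)
  then show ?thesis
    unfolding div_var_def by (simp add: vimage_def)
qed

lemma single_diff_add:
  assumes "Poly_Mapping.lookup m v \<noteq> 0"
  shows "m - Poly_Mapping.single v 1 + Poly_Mapping.single v (1::nat) = m"
  by (rule poly_mapping_eqI) (use assms in \<open>auto simp: lookup_add lookup_minus lookup_single when_def\<close>)

lemma lookup_var_mult:
  "Poly_Mapping.lookup (var v * h) m =
     (Poly_Mapping.lookup h (m - Poly_Mapping.single v 1) when Poly_Mapping.lookup m v \<noteq> 0)"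
proof -
  have "Poly_Mapping.lookup (var v * h) m
      = (\<Sum>q. Poly_Mapping.lookup h q when m = Poly_Mapping.single v 1 + q)"
    by (simp add: var_def lookup_mult lookup_single when_mult)
  also have "\<dots> = (\<Sum>q. Poly_Mapping.lookup h q when Poly_Mapping.lookup m v \<noteq> 0
                        when q = m - Poly_Mapping.single v 1)"
  proof (rule Sum_any.cong)
    fix q
    have "m = Poly_Mapping.single v 1 + q
          \<longleftrightarrow> Poly_Mapping.lookup m v \<noteq> 0 \<and> q = m - Poly_Mapping.single v 1"
      using single_diff_add[of m v] by (auto simp: lookup_add add.commute)
    then show "(Poly_Mapping.lookup h q when m = Poly_Mapping.single v 1 + q) =
        (Poly_Mapping.lookup h q when Poly_Mapping.lookup m v \<noteq> 0 when q = m - Poly_Mapping.single v 1)"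
      by (auto simp: when_def)
  qed
  finally show ?thesis by simp
qed

lemma kill_var_decomp: "f = kill_var v f + var v * div_var v f"
proof (rule poly_mapping_eqI)
  fix m
  show "Poly_Mapping.lookup f m = Poly_Mapping.lookup (kill_var v f + var v * div_var v f) m"
    using single_diff_add[of m v]
    by (cases "Poly_Mapping.lookup m v = 0") (simp_all add: lookup_add lookup_kill_var lookup_var_mult lookup_div_var)
qed

lemma kill_var_var_mult: "kill_var v (var v * h) = 0"
  by (rule poly_mapping_eqI) (simp add: lookup_kill_var lookup_var_mult when_def)

lemma kill_var_add: "kill_var v (f + g) = kill_var v f + kill_var v g"
  by (rule poly_mapping_eqI) (simp add: lookup_kill_var lookup_add when_add_distrib)

lemma kill_var_zero: "kill_var v 0 = 0"
  by (rule poly_mapping_eqI) (simp add: lookup_kill_var)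

lemma kill_var_sum: "kill_var v (sum g S) = (\<Sum>x\<in>S. kill_var v (g x))"
  by (induction S rule: infinite_finite_induct) (simp_all add: kill_var_zero kill_var_add)

lemma keys_kill_var:
  "Poly_Mapping.keys (kill_var v f) = {m \<in> Poly_Mapping.keys f. Poly_Mapping.lookup m v = 0}"
  by (auto simp: in_keys_iff lookup_kill_var)

lemma kill_var_polyring:
  assumes "f \<in> polyring T W"
  shows "kill_var v f \<in> polyring T (W - {v})"
  unfolding polyring_def
proof (intro CollectI ballI)
  fix m
  assume "m \<in> Poly_Mapping.keys (kill_var v f)"
  then have "m \<in> Poly_Mapping.keys f" "v \<notin> Poly_Mapping.keys m"
    by (auto simp: keys_kill_var in_keys_iff)
  then show "Poly_Mapping.keys m \<subseteq> W - {v}"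
    using assms unfolding polyring_def by blast
qed

lemma kill_var_id:
  assumes "f \<in> polyring T V" "v \<notin> V"
  shows "kill_var v f = f"
proof (rule poly_mapping_eqI)
  fix m
  have "v \<notin> Poly_Mapping.keys m" if "m \<in> Poly_Mapping.keys f"
    using assms that unfolding polyring_def by blast
  then show "Poly_Mapping.lookup (kill_var v f) m = Poly_Mapping.lookup f m"
    by (cases "m \<in> Poly_Mapping.keys f") (auto simp: lookup_kill_var when_def in_keys_iff)
qed

lemma div_var_polyring:
  assumes "f \<in> polyring T W"
  shows "div_var v f \<in> polyring T W"
  unfolding polyring_def
proof (intro CollectI ballI)
  fix m
  assume "m \<in> Poly_Mapping.keys (div_var v f)"
  then have "m + Poly_Mapping.single v 1 \<in> Poly_Mapping.keys f"
    by (simp add: in_keys_iff lookup_div_var)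
  then have "Poly_Mapping.keys (m + Poly_Mapping.single v 1) \<subseteq> W"
    using assms unfolding polyring_def by blast
  then show "Poly_Mapping.keys m \<subseteq> W"
    by (simp add: keys_add_exponents)
qed

lemma homog_kill_var: "homog i f \<Longrightarrow> homog i (kill_var v f)"
  unfolding homog_def by (simp add: keys_kill_var)

lemma kill_var_monom:
  "kill_var v (monom m) = (if Poly_Mapping.lookup m v = 0 then monom m else 0)"
  by (rule poly_mapping_eqI) (simp add: lookup_kill_var monom_def lookup_single when_def)

lemma kill_var_one: "kill_var v 1 = 1"
  using kill_var_id[OF polyring_one[of _ "{}"]] by simp

text \<open>The substitution is multiplicative: expand both factors by the decomposition;
  the x_v-free parts multiply to an x_v-free product, everything else is a multiple of x_v.\<close>
lemma kill_var_mult: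
  fixes f g :: "'k::field mpoly"
  shows "kill_var v (f * g) = kill_var v f * kill_var v g"
proof -
  let ?kf = "kill_var v f" and ?kg = "kill_var v g"
  let ?df = "div_var v f" and ?dg = "div_var v g"
  have "f * g = (?kf + var v * ?df) * (?kg + var v * ?dg)"
    using kill_var_decomp[of f v] kill_var_decomp[of g v] by (rule arg_cong2)
  also have "\<dots> = ?kf * ?kg + var v * (?df * ?kg + ?kf * ?dg + var v * ?df * ?dg)"
    by algebra
  finally have "kill_var v (f * g) = kill_var v (?kf * ?kg)"
    by (simp only: kill_var_add kill_var_var_mult add_0_right)
  moreover have "?kf * ?kg \<in> polyring TYPE('k) (UNIV - {v})"
    by (intro polyring_mult kill_var_polyring polyring_UNIV)
  then have "kill_var v (?kf * ?kg) = ?kf * ?kg"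
    by (rule kill_var_id) simp
  ultimately show ?thesis
    by simp
qed

lemma kill_var_prod: "kill_var v (prod g S) = (\<Prod>x\<in>S. kill_var v (g x))"
  by (induction S rule: infinite_finite_induct) (simp_all add: kill_var_mult kill_var_one)

lemma kill_var_power: "kill_var v (f ^ n) = kill_var v f ^ n"
  by (induction n) (simp_all add: kill_var_mult kill_var_one)

lemma kill_var_var: "kill_var v (var j) = (if j = v then 0 else var j)"
  using kill_var_var_mult[of v 1] kill_var_id[OF var_polyring[of j "{j}"], of v] by auto


section \<open>The ideal of the cone\<close>

lemma dimp1_cone:
  assumes "simplicial_complex V \<Delta>" and "v \<notin> V"
  shows "dimp1 (cone v \<Delta>) = Suc (dimp1 \<Delta>)"
proof -
  have faces: "finite V" "{} \<in> \<Delta>" "\<forall>F\<in>\<Delta>. F \<subseteq> V"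
    using assms(1) unfolding simplicial_complex_def by blast+
  then have "finite \<Delta>"
    by (meson Pow_iff finite_Pow_iff finite_subset subsetI)
  then have cards: "finite (card ` \<Delta>)" "card ` \<Delta> \<noteq> {}"
    using faces(2) by auto
  have card_insert: "card (insert v F) = Suc (card F)" if "F \<in> \<Delta>" for F
    using that faces(1,3) assms(2) by (meson card_insert_disjoint finite_subset subsetD)
  have "cone v \<Delta> = \<Delta> \<union> insert v ` \<Delta>"
    unfolding cone_def by blast
  then have "card ` cone v \<Delta> = card ` \<Delta> \<union> Suc ` card ` \<Delta>"
    using card_insert by (auto simp: image_image image_Un cong: image_cong)
  then show ?thesis
    using cards by (simp add: dimp1_def Max_Un mono_Max_commute[symmetric] mono_Suc)
qed

lemma SR_gens_cone: "v \<notin> V \<Longrightarrow> SR_gens V \<Delta> \<subseteq> SR_gens (insert v V) (cone v \<Delta>)"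
  unfolding SR_gens_def cone_def by blast

lemma SR_Theta_cone_mono:
  "v \<notin> V \<Longrightarrow> SR_Theta V \<Delta> \<Theta> \<subseteq> SR_Theta (insert v V) (cone v \<Delta>) (\<Theta> @ [var v])"
  unfolding SR_Theta_def using SR_gens_cone
  by (intro ideal_in_mono) auto

lemma var_mult_SR_Theta_cone:
  "q \<in> polyring TYPE('k) (insert v V) \<Longrightarrow>
     var v * q \<in> SR_Theta (insert v V) (cone v \<Delta>) (\<Theta> @ [var v :: 'k::field mpoly])"
  unfolding SR_Theta_def using ideal_in_gen[of q "insert v V" "var v"] by (simp add: mult.commute)

lemma kill_var_cone_gen:
  assumes "finite V" and "v \<notin> V" and "\<forall>\<theta>\<in>set \<Theta>. linear_form V \<theta>"
    and "g \<in> SR_gens (insert v V) (cone v \<Delta>) \<union> set (\<Theta> @ [var v :: 'k::field mpoly])"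
  shows "kill_var v g = 0 \<or> kill_var v g \<in> SR_gens V \<Delta> \<union> set \<Theta>"
  using assms(4)
proof (elim UnE)
  assume "g \<in> SR_gens (insert v V) (cone v \<Delta>)"
  then obtain F where g: "g = (\<Prod>j\<in>F. var j)" and F: "F \<subseteq> insert v V" "F \<notin> cone v \<Delta>"
    unfolding SR_gens_def by blast
  have "finite F"
    using F(1) assms(1) finite_subset by blast
  then have kg: "kill_var v g = (\<Prod>j\<in>F. if j = v then 0 else var j)"
    by (simp add: g kill_var_prod kill_var_var)
  show ?thesis
  proof (cases "v \<in> F")
    case True
    then have "kill_var v g = 0"
      unfolding kg using \<open>finite F\<close> by (intro prod_zero) auto
    then show ?thesis by (rule disjI1)
  next
    case False
    then have "F \<subseteq> V" "F \<notin> \<Delta>"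
      using F unfolding cone_def by blast+
    then show ?thesis
      using False by (auto simp: kg SR_gens_def intro!: prod.cong)
  qed
next
  assume "g \<in> set (\<Theta> @ [var v])"
  moreover have "kill_var v \<theta> = \<theta>" if "\<theta> \<in> set \<Theta>" for \<theta>
    using that assms(2,3) kill_var_id unfolding linear_form_def by blast
  ultimately show ?thesis
    by (auto simp: kill_var_var)
qed

lemma kill_var_SR_Theta_cone:
  assumes "finite V" and "v \<notin> V" and "\<forall>\<theta>\<in>set \<Theta>. linear_form V \<theta>"
    and "f \<in> SR_Theta (insert v V) (cone v \<Delta>) (\<Theta> @ [var v :: 'k::field mpoly])"
  shows "kill_var v f \<in> SR_Theta V \<Delta> \<Theta>"
proof -
  obtain S c where S: "S \<subseteq> SR_gens (insert v V) (cone v \<Delta>) \<union> set (\<Theta> @ [var v])"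
      and c: "\<forall>g\<in>S. c g \<in> polyring TYPE('k) (insert v V)" and f: "f = (\<Sum>g\<in>S. c g * g)"
    using assms(4) unfolding SR_Theta_def ideal_in_def by blast
  have "kill_var v (c g) * kill_var v g \<in> SR_Theta V \<Delta> \<Theta>" if "g \<in> S" for g
  proof -
    have "kill_var v (c g) \<in> polyring TYPE('k) (insert v V - {v})"
      using c that by (blast intro: kill_var_polyring)
    then have coeff: "kill_var v (c g) \<in> polyring TYPE('k) V"
      using assms(2) by simp
    have "kill_var v g = 0 \<or> kill_var v g \<in> SR_gens V \<Delta> \<union> set \<Theta>"
      using kill_var_cone_gen[OF assms(1-3)] S that by blast
    then show ?thesis
      unfolding SR_Theta_def
    proof
      assume "kill_var v g \<in> SR_gens V \<Delta> \<union> set \<Theta>"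
      then show "kill_var v (c g) * kill_var v g \<in> ideal_in V (SR_gens V \<Delta> \<union> set \<Theta>)"
        using coeff by (rule ideal_in_gen[rotated])
    qed (simp add: ideal_in_zero)
  qed
  then show ?thesis
    unfolding f kill_var_sum kill_var_mult SR_Theta_def by (rule ideal_in_sum)
qed

lemma SR_Theta_cone_iff:
  assumes "finite V" and "v \<notin> V" and "\<forall>\<theta>\<in>set \<Theta>. linear_form V \<theta>"
    and "f \<in> polyring TYPE('k) (insert v V)"
  shows "f \<in> SR_Theta (insert v V) (cone v \<Delta>) (\<Theta> @ [var v :: 'k::field mpoly])
     \<longleftrightarrow> kill_var v f \<in> SR_Theta V \<Delta> \<Theta>"
proof
  assume "kill_var v f \<in> SR_Theta V \<Delta> \<Theta>"
  then have "kill_var v f \<in> SR_Theta (insert v V) (cone v \<Delta>) (\<Theta> @ [var v])"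
    using SR_Theta_cone_mono[OF assms(2)] by blast
  moreover have "var v * div_var v f \<in> SR_Theta (insert v V) (cone v \<Delta>) (\<Theta> @ [var v])"
    using assms(4) by (intro var_mult_SR_Theta_cone div_var_polyring)
  ultimately show "f \<in> SR_Theta (insert v V) (cone v \<Delta>) (\<Theta> @ [var v])"
    using kill_var_decomp[of f v] unfolding SR_Theta_def by (metis ideal_in_add)
qed (rule kill_var_SR_Theta_cone[OF assms(1-3)])


text \<open>\<Theta> extended by x_v is a linear system of parameters for the cone: it has the
  right length by dimp1_cone, and a monomial of high degree vanishes because its
  image under x_v := 0 is either 0 or a monomial of high degree in k[x_V].\<close>
lemma lsop_cone:
  assumes "simplicial_complex V \<Delta>" and "v \<notin> V" and "lsop V \<Delta> \<Theta>"
  shows "lsop (insert v V) (cone v \<Delta>) (\<Theta> @ [var v :: 'k::field mpoly])"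
  unfolding lsop_def
proof (intro conjI)
  have finV: "finite V"
    using assms(1) unfolding simplicial_complex_def by blast
  have lf: "\<forall>\<theta>\<in>set \<Theta>. linear_form V \<theta>"
    using assms(3) unfolding lsop_def by blast
  then show "\<forall>\<theta>\<in>set (\<Theta> @ [var v]). linear_form (insert v V) \<theta>"
    using linear_form_var[of v "insert v V"] linear_form_mono[of V "insert v V"] by auto
  show "length (\<Theta> @ [var v]) = dimp1 (cone v \<Delta>)"
    using assms(3) dimp1_cone[OF assms(1,2)] unfolding lsop_def by simp
  obtain N where N: "\<And>m. Poly_Mapping.keys m \<subseteq> V \<Longrightarrow> N \<le> mdeg m \<Longrightarrow> monom m \<in> SR_Theta V \<Delta> \<Theta>"
    using assms(3) unfolding lsop_def by blast
  have "monom m \<in> SR_Theta (insert v V) (cone v \<Delta>) (\<Theta> @ [var v])"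
    if m: "Poly_Mapping.keys m \<subseteq> insert v V" "N \<le> mdeg m" for m
  proof -
    have "Poly_Mapping.lookup m v = 0 \<Longrightarrow> Poly_Mapping.keys m \<subseteq> V"
      using m(1) by (auto simp: in_keys_iff)
    then have "kill_var v (monom m) \<in> SR_Theta V \<Delta> \<Theta>"
      using N[OF _ m(2)] by (simp add: kill_var_monom SR_Theta_def ideal_in_zero)
    then show ?thesis
      using SR_Theta_cone_iff[OF finV assms(2) lf monom_polyring[OF m(1)]] by blast
  qed
  then show "\<exists>N. \<forall>m. Poly_Mapping.keys m \<subseteq> insert v V \<and> N \<le> mdeg m \<longrightarrow>
      monom m \<in> SR_Theta (insert v V) (cone v \<Delta>) (\<Theta> @ [var v])"
    by blast
qed

text \<open>The Lefschetz element of \<Delta> remains one for the cone: if \<omega>^(s-2i) f vanishes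
  in k[cone \<Delta>]/\<Theta>', then \<omega>^(s-2i) f|_(x_v=0) vanishes in k[\<Delta>]/\<Theta>, because \<omega>
  does not involve x_v; so f|_(x_v=0) vanishes there, hence f vanishes in the cone.\<close>
lemma lefschetz_element_cone:
  assumes "finite V" and "v \<notin> V" and "\<forall>\<theta>\<in>set \<Theta>. linear_form V \<theta>"
    and le: "lefschetz_element V \<Delta> s \<Theta> \<omega>"
  shows "lefschetz_element (insert v V) (cone v \<Delta>) s (\<Theta> @ [var v :: 'k::field mpoly]) \<omega>"
  unfolding lefschetz_element_def
proof (intro conjI allI impI ballI)
  have "linear_form V \<omega>"
    using le unfolding lefschetz_element_def by blast
  then show "linear_form (insert v V) \<omega>"
    by (rule linear_form_mono[rotated]) blast
  have kw: "kill_var v \<omega> = \<omega>"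
    using \<open>linear_form V \<omega>\<close> assms(2) kill_var_id unfolding linear_form_def by blast
  fix i :: nat and f :: "'k mpoly"
  assume i: "int i \<le> (s - 1) div 2" and f: "f \<in> polyring TYPE('k) (insert v V)"
    and hom: "homog i f"
    and "\<omega> ^ nat (s - 2 * int i) * f \<in> SR_Theta (insert v V) (cone v \<Delta>) (\<Theta> @ [var v])"
  from this(4) have "kill_var v (\<omega> ^ nat (s - 2 * int i) * f) \<in> SR_Theta V \<Delta> \<Theta>"
    by (rule kill_var_SR_Theta_cone[OF assms(1-3)])
  then have "\<omega> ^ nat (s - 2 * int i) * kill_var v f \<in> SR_Theta V \<Delta> \<Theta>"
    by (simp add: kill_var_mult kill_var_power kw)
  moreover have "kill_var v f \<in> polyring TYPE('k) V"
    using kill_var_polyring[OF f, of v] assms(2) by simp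
  ultimately have "kill_var v f \<in> SR_Theta V \<Delta> \<Theta>"
    using le i homog_kill_var[OF hom] unfolding lefschetz_element_def by blast
  then show "f \<in> SR_Theta (insert v V) (cone v \<Delta>) (\<Theta> @ [var v])"
    using SR_Theta_cone_iff[OF assms(1-3) f] by blast
qed

theorem lemma2p1:
  fixes V :: "nat set" and \<Delta> :: "nat set set" and d :: nat and s :: int and v :: nat
  assumes "simplicial_complex V \<Delta>"
    and "dimp1 \<Delta> = d"
    and "v \<notin> V"
    and "s_lefschetz TYPE('k::field) V \<Delta> s"
  shows "s_lefschetz TYPE('k) (insert v V) (cone v \<Delta>) s"
proof -
  obtain \<Theta> :: "'k mpoly list" and \<omega> where ls: "lsop V \<Delta> \<Theta>" and le: "lefschetz_element V \<Delta> s \<Theta> \<omega>"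
    using assms(4) unfolding s_lefschetz_def by blast
  have "finite V"
    using assms(1) unfolding simplicial_complex_def by blast
  moreover have "\<forall>\<theta>\<in>set \<Theta>. linear_form V \<theta>"
    using ls unfolding lsop_def by blast
  ultimately have "lefschetz_element (insert v V) (cone v \<Delta>) s (\<Theta> @ [var v]) \<omega>"
    using lefschetz_element_cone[OF _ assms(3) _ le] by blast
  moreover have "lsop (insert v V) (cone v \<Delta>) (\<Theta> @ [var v])"
    using lsop_cone[OF assms(1,3) ls] .
  ultimately show ?thesis
    unfolding s_lefschetz_def by blast
qed

end
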